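(* Let $\mathsf{MRK}$ be the axiom scheme $\neg\forall\alpha\mathsf{P}\to\exists\alpha\mathsf{P}^\bot$ for atomic $\mathsf{P}$. (1) Every instance of $\mathsf{MRK}$ is provable in $\mathsf{HA}+\mathsf{EM}^-$. (2) Conversely, the rule $\mathsf{EM}^-$ is derivable in $\mathsf{HA}+\mathsf{MRK}$: for every formula $A$ and atomic $\mathsf{P}$, if $\Gamma,A\vdash\exists\alpha\mathsf{P}$ and $\Gamma,\neg A\vdash\exists\alpha\mathsf{P}$ in $\mathsf{HA}+\mathsf{MRK}$, then $\Gamma\vdash\exists\alpha\mathsf{P}$ in $\mathsf{HA}+\mathsf{MRK}$.
   Context: $\mathsf{HA}$ is intuitionistic first-order arithmetic (Heyting arithmetic, in natural deduction) over $0,\mathsf{S},+,\cdot,=$ with the Peano axioms and induction scheme; atomic formulas are decidable and $\mathsf{P}^\bot$ denotes the complementary atomic predicate of $\mathsf{P}$ (so $\mathsf{P}^\bot\equiv\neg\mathsf{P}$). $\mathsf{HA}+\mathsf{EM}^-$ is $\mathsf{HA}$ extended with the rule $\mathsf{EM}^-$: for an arbitrary formula $A$ and atomic $\mathsf{P}$, from $\Gamma,A\vdash\exists x\mathsf{P}$ and $\Gamma,\neg A\vdash\exists x\mathsf{P}$ infer $\Gamma\vdash\exists x\mathsf{P}$ (discharging $A$ and $\neg A$). $\mathsf{HA}+\mathsf{MRK}$ is $\mathsf{HA}$ with the instances of $\mathsf{MRK}$ as additional axioms. *)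

theory Defs
  imports Main
begin

datatype trm = Var nat | Zero | Succ trm | Plus trm trm | Times trm trm

text \<open>Atomic formulas: equations and their complements (the complementary
  atomic predicate P-bot of an atomic P; decidable atoms).\<close>
datatype fm =
    Eq trm trm
  | Neq trm trm
  | Bot
  | Conj fm fm
  | Disj fm fm
  | Imp fm fm
  | All fm
  | Ex fm

definition Neg :: "fm \<Rightarrow> fm" where "Neg A = Imp A Bot"

fun atomic :: "fm \<Rightarrow> bool" where
  "atomic (Eq t s) = True"
| "atomic (Neq t s) = True"
| "atomic _ = False"

fun comp :: "fm \<Rightarrow> fm" where
  "comp (Eq t s) = Neq t s"
| "comp (Neq t s) = Eq t s"
| "comp A = A"

fun substt :: "(nat \<Rightarrow> trm) \<Rightarrow> trm \<Rightarrow> trm" where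
  "substt \<sigma> (Var n) = \<sigma> n"
| "substt \<sigma> Zero = Zero"
| "substt \<sigma> (Succ t) = Succ (substt \<sigma> t)"
| "substt \<sigma> (Plus t u) = Plus (substt \<sigma> t) (substt \<sigma> u)"
| "substt \<sigma> (Times t u) = Times (substt \<sigma> t) (substt \<sigma> u)"

definition liftt :: "trm \<Rightarrow> trm" where "liftt t = substt (\<lambda>n. Var (Suc n)) t"

definition up :: "(nat \<Rightarrow> trm) \<Rightarrow> nat \<Rightarrow> trm" where
  "up \<sigma> n = (case n of 0 \<Rightarrow> Var 0 | Suc m \<Rightarrow> liftt (\<sigma> m))"

fun substf :: "(nat \<Rightarrow> trm) \<Rightarrow> fm \<Rightarrow> fm" where
  "substf \<sigma> (Eq t u) = Eq (substt \<sigma> t) (substt \<sigma> u)"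
| "substf \<sigma> (Neq t u) = Neq (substt \<sigma> t) (substt \<sigma> u)"
| "substf \<sigma> Bot = Bot"
| "substf \<sigma> (Conj A B) = Conj (substf \<sigma> A) (substf \<sigma> B)"
| "substf \<sigma> (Disj A B) = Disj (substf \<sigma> A) (substf \<sigma> B)"
| "substf \<sigma> (Imp A B) = Imp (substf \<sigma> A) (substf \<sigma> B)"
| "substf \<sigma> (All A) = All (substf (up \<sigma>) A)"
| "substf \<sigma> (Ex A) = Ex (substf (up \<sigma>) A)"

definition inst :: "fm \<Rightarrow> trm \<Rightarrow> fm" where
  "inst A t = substf (\<lambda>n. if n = 0 then t else Var (n - 1)) A"

definition lift :: "fm \<Rightarrow> fm" where
  "lift A = substf (\<lambda>n. Var (Suc n)) A"

text \<open>A[S x / x], where x is variable 0, staying under the same binder.\<close>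
definition succ_inst :: "fm \<Rightarrow> fm" where
  "succ_inst A = substf (\<lambda>n. if n = 0 then Succ (Var 0) else Var n) A"

inductive_set HA_axioms :: "fm set" where
  eq_refl: "Eq t t \<in> HA_axioms"
| eq_subst: "Imp (Eq t s) (Imp (inst A t) (inst A s)) \<in> HA_axioms"
| neq_1: "Imp (Neq t s) (Neg (Eq t s)) \<in> HA_axioms"
| neq_2: "Imp (Neg (Eq t s)) (Neq t s) \<in> HA_axioms"
| succ_nz: "Neg (Eq (Succ t) Zero) \<in> HA_axioms"
| succ_inj: "Imp (Eq (Succ t) (Succ s)) (Eq t s) \<in> HA_axioms"
| plus_0: "Eq (Plus t Zero) t \<in> HA_axioms"
| plus_S: "Eq (Plus t (Succ s)) (Succ (Plus t s)) \<in> HA_axioms"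
| times_0: "Eq (Times t Zero) Zero \<in> HA_axioms"
| times_S: "Eq (Times t (Succ s)) (Plus (Times t s) t) \<in> HA_axioms"
| ind_scheme: "Imp (inst A Zero) (Imp (All (Imp A (succ_inst A))) (All A)) \<in> HA_axioms"

inductive deriv :: "fm set \<Rightarrow> bool \<Rightarrow> fm list \<Rightarrow> fm \<Rightarrow> bool" for Ax :: "fm set" and em :: bool where
  Assm: "A \<in> set \<Gamma> \<Longrightarrow> deriv Ax em \<Gamma> A"
| HAAx: "A \<in> HA_axioms \<Longrightarrow> deriv Ax em \<Gamma> A"
| ExtraAx: "A \<in> Ax \<Longrightarrow> deriv Ax em \<Gamma> A"
| BotE: "deriv Ax em \<Gamma> Bot \<Longrightarrow> deriv Ax em \<Gamma> A"
| ImpI: "deriv Ax em (A # \<Gamma>) B \<Longrightarrow> deriv Ax em \<Gamma> (Imp A B)"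
| ImpE: "deriv Ax em \<Gamma> (Imp A B) \<Longrightarrow> deriv Ax em \<Gamma> A \<Longrightarrow> deriv Ax em \<Gamma> B"
| ConjI: "deriv Ax em \<Gamma> A \<Longrightarrow> deriv Ax em \<Gamma> B \<Longrightarrow> deriv Ax em \<Gamma> (Conj A B)"
| ConjE1: "deriv Ax em \<Gamma> (Conj A B) \<Longrightarrow> deriv Ax em \<Gamma> A"
| ConjE2: "deriv Ax em \<Gamma> (Conj A B) \<Longrightarrow> deriv Ax em \<Gamma> B"
| DisjI1: "deriv Ax em \<Gamma> A \<Longrightarrow> deriv Ax em \<Gamma> (Disj A B)"
| DisjI2: "deriv Ax em \<Gamma> B \<Longrightarrow> deriv Ax em \<Gamma> (Disj A B)"
| DisjE: "deriv Ax em \<Gamma> (Disj A B) \<Longrightarrow> deriv Ax em (A # \<Gamma>) C \<Longrightarrow> deriv Ax em (B # \<Gamma>) C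
          \<Longrightarrow> deriv Ax em \<Gamma> C"
| AllI: "deriv Ax em (map lift \<Gamma>) A \<Longrightarrow> deriv Ax em \<Gamma> (All A)"
| AllE: "deriv Ax em \<Gamma> (All A) \<Longrightarrow> deriv Ax em \<Gamma> (inst A t)"
| ExI: "deriv Ax em \<Gamma> (inst A t) \<Longrightarrow> deriv Ax em \<Gamma> (Ex A)"
| ExE: "deriv Ax em \<Gamma> (Ex A) \<Longrightarrow> deriv Ax em (A # map lift \<Gamma>) (lift B) \<Longrightarrow> deriv Ax em \<Gamma> B"
| EMminus: "em \<Longrightarrow> atomic P \<Longrightarrow> deriv Ax em (A # \<Gamma>) (Ex P) \<Longrightarrow> deriv Ax em (Neg A # \<Gamma>) (Ex P)
          \<Longrightarrow> deriv Ax em \<Gamma> (Ex P)"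

abbreviation HA_EM :: "fm list \<Rightarrow> fm \<Rightarrow> bool" where
  "HA_EM \<equiv> deriv {} True"

definition MRK_inst :: "fm \<Rightarrow> fm" where
  "MRK_inst P = Imp (Neg (All P)) (Ex (comp P))"

definition MRK :: "fm set" where
  "MRK = {MRK_inst P | P. atomic P}"

abbreviation HA_MRK :: "fm list \<Rightarrow> fm \<Rightarrow> bool" where
  "HA_MRK \<equiv> deriv MRK False"

end

theory Submission
  imports Defs
begin

text \<open>(1) Assume \<open>\<not>\<forall>x P\<close> and apply \<open>EM\<^sup>-\<close> to \<open>\<exists>x P\<^sup>\<bottom>\<close>: if it fails, every \<open>P(x)\<close> holds, because
  \<open>EM\<^sup>-\<close> applied to the underlying equation decides \<open>P(x)\<close> against \<open>P\<^sup>\<bottom>(x)\<close> (the conclusion being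
  phrased as a vacuous existential \<open>\<exists>y P(x)\<close>), and this contradicts \<open>\<not>\<forall>x P\<close>.
  (2) Under \<open>\<forall>x P\<^sup>\<bottom>\<close> we have \<open>\<not>\<exists>x P\<close>, so both premises of \<open>EM\<^sup>-\<close> yield \<open>\<bottom>\<close>; hence
  \<open>\<not>\<forall>x P\<^sup>\<bottom>\<close>, and the \<open>MRK\<close> instance for \<open>P\<^sup>\<bottom>\<close> gives \<open>\<exists>x P\<close>.\<close>

lemma substt_substt: "substt \<sigma> (substt \<tau> t) = substt (\<lambda>n. substt \<sigma> (\<tau> n)) t"
  by (induction t) auto

lemma substt_Var [simp]: "substt Var t = t"
  by (induction t) auto

lemma up_Var [simp]: "up Var = Var"
  by (auto simp: up_def liftt_def split: nat.split)

lemma substt_up_up: "substt (up \<sigma>) (up \<tau> n) = up (\<lambda>n. substt \<sigma> (\<tau> n)) n"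
  by (cases n) (simp_all add: up_def liftt_def substt_substt)

lemma substf_substf: "substf \<sigma> (substf \<tau> A) = substf (\<lambda>n. substt \<sigma> (\<tau> n)) A"
  by (induction A arbitrary: \<sigma> \<tau>) (simp_all add: substt_substt substt_up_up)

lemma substf_Var [simp]: "substf Var A = A"
  by (induction A) simp_all

lemma inst_lift [simp]: "inst (lift A) t = A"
  by (simp add: inst_def lift_def substf_substf)

lemma inst_up_lift: "inst (substf (up (\<lambda>n. Var (Suc n))) A) (Var 0) = A"
proof -
  have "(\<lambda>n. substt (\<lambda>n. if n = 0 then Var 0 else Var (n - 1)) (up (\<lambda>n. Var (Suc n)) n)) = Var"
    by (auto simp: up_def liftt_def split: nat.split)
  then show ?thesis by (simp add: inst_def substf_substf)
qed

lemma comp_atomic: "atomic P \<Longrightarrow> atomic (comp P)"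
  by (cases P) auto

lemma atomic_lift [simp]: "atomic (lift P) = atomic P"
  by (cases P) (simp_all add: lift_def)

lemma comp_comp: "atomic P \<Longrightarrow> comp (comp P) = P"
  by (cases P) auto

lemma deriv_weaken: "deriv Ax em \<Gamma> A \<Longrightarrow> set \<Gamma> \<subseteq> set \<Gamma>' \<Longrightarrow> deriv Ax em \<Gamma>' A"
proof (induction arbitrary: \<Gamma>' rule: deriv.induct)
  case (ImpI A \<Gamma> B)
  then show ?case by (metis deriv.ImpI insert_mono list.simps(15))
next
  case (DisjE \<Gamma> A B C)
  then show ?case by (metis deriv.DisjE insert_mono list.simps(15))
next
  case (EMminus P A \<Gamma>)
  then show ?case by (metis deriv.EMminus insert_mono list.simps(15))
next
  case (AllI \<Gamma> A)
  then show ?case by (metis deriv.AllI image_mono list.set_map)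
next
  case (ExE \<Gamma> A B)
  then show ?case by (metis deriv.ExE image_mono insert_mono list.set_map list.simps(15))
qed (meson deriv.intros subsetD)+

lemma deriv_cut: "deriv Ax em (B # \<Gamma>) C \<Longrightarrow> deriv Ax em \<Gamma> B \<Longrightarrow> deriv Ax em \<Gamma> C"
  by (rule deriv.ImpE[OF deriv.ImpI])

lemma deriv_replace_hyp:
  "deriv Ax em (B # \<Gamma>) C \<Longrightarrow> deriv Ax em (B' # \<Gamma>) B \<Longrightarrow> deriv Ax em (B' # \<Gamma>) C"
  by (rule deriv_cut, erule deriv_weaken) auto

lemma deriv_NegE: "deriv Ax em \<Gamma> (Neg A) \<Longrightarrow> deriv Ax em \<Gamma> A \<Longrightarrow> deriv Ax em \<Gamma> C"
  unfolding Neg_def by (rule deriv.BotE[OF deriv.ImpE])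

lemma deriv_Ex_lift_iff: "deriv Ax em \<Gamma> (Ex (lift A)) \<longleftrightarrow> deriv Ax em \<Gamma> A"
  by (metis deriv.Assm deriv.ExE deriv.ExI inst_lift list.set_intros(1))

lemma deriv_atomic_comp_contr:
  assumes "atomic P" "deriv Ax em \<Gamma> P" "deriv Ax em \<Gamma> (comp P)"
  shows "deriv Ax em \<Gamma> C"
proof -
  have "deriv Ax em \<Gamma> (Neg (Eq t s))" if "deriv Ax em \<Gamma> (Neq t s)" for t s
    using that by (rule deriv.ImpE[OF deriv.HAAx[OF HA_axioms.neq_1]])
  with assms show ?thesis
    by (cases P) (auto intro: deriv_NegE)
qed

text \<open>The variable 0 of the current context plays the role of the bound variable of
  the (lifted) hypothesis \<open>\<not>\<exists>x A\<close>.\<close>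
lemma deriv_lift_Neg_Ex_contr:
  assumes "lift (Neg (Ex A)) \<in> set \<Gamma>" "deriv Ax em \<Gamma> A"
  shows "deriv Ax em \<Gamma> C"
proof -
  have "deriv Ax em \<Gamma> (Neg (Ex (substf (up (\<lambda>n. Var (Suc n))) A)))"
    using assms(1) by (simp add: deriv.Assm lift_def Neg_def)
  moreover have "deriv Ax em \<Gamma> (Ex (substf (up (\<lambda>n. Var (Suc n))) A))"
    using assms(2) by (intro deriv.ExI[where t = "Var 0"]) (simp add: inst_up_lift)
  ultimately show ?thesis by (rule deriv_NegE)
qed

lemma EMminus_atomic_cases:
  assumes "atomic P" "atomic Q"
    and pos: "deriv Ax True (P # \<Gamma>) (Ex Q)" and neg: "deriv Ax True (comp P # \<Gamma>) (Ex Q)"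
  shows "deriv Ax True \<Gamma> (Ex Q)"
proof -
  obtain t s where P: "P = Eq t s \<or> P = Neq t s"
    using \<open>atomic P\<close> by (cases P) auto
  have Neq_if_not_Eq: "deriv Ax True (Neg (Eq t s) # \<Gamma>) (Neq t s)"
    by (rule deriv.ImpE[OF deriv.HAAx[OF HA_axioms.neq_2] deriv.Assm]) simp
  from P show ?thesis
  proof
    assume P: "P = Eq t s"
    have "deriv Ax True (Neg (Eq t s) # \<Gamma>) (Ex Q)"
      using neg P Neq_if_not_Eq by (simp add: deriv_replace_hyp)
    with pos P show ?thesis using \<open>atomic Q\<close> by (simp add: deriv.EMminus)
  next
    assume P: "P = Neq t s"
    have "deriv Ax True (Neg (Eq t s) # \<Gamma>) (Ex Q)"
      using pos P Neq_if_not_Eq by (simp add: deriv_replace_hyp)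
    with neg P show ?thesis using \<open>atomic Q\<close> by (simp add: deriv.EMminus)
  qed
qed

lemma HA_EM_MRK_inst:
  assumes "atomic P"
  shows "HA_EM [] (MRK_inst P)"
proof -
  let ?\<Gamma> = "[Neg (Ex (comp P)), Neg (All P)]"
  have "HA_EM (P # map lift ?\<Gamma>) (Ex (lift P))"
    by (simp add: deriv_Ex_lift_iff deriv.Assm)
  moreover have "HA_EM (comp P # map lift ?\<Gamma>) (Ex (lift P))"
    by (rule deriv_lift_Neg_Ex_contr[where A = "comp P"]) (simp_all add: deriv.Assm)
  ultimately have "HA_EM (map lift ?\<Gamma>) (Ex (lift P))"
    by (rule EMminus_atomic_cases[rotated 2]) (simp_all add: assms)
  then have "HA_EM ?\<Gamma> (All P)"
    by (simp only: deriv_Ex_lift_iff deriv.AllI)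
  then have neg: "HA_EM ?\<Gamma> (Ex (comp P))"
    by (rule deriv_NegE[OF deriv.Assm, rotated]) simp
  have "HA_EM [Neg (All P)] (Ex (comp P))"
    by (rule deriv.EMminus[OF TrueI comp_atomic[OF assms] _ neg]) (simp add: deriv.Assm)
  then show ?thesis
    unfolding MRK_inst_def by (rule deriv.ImpI)
qed

lemma deriv_All_comp_Neg_Ex:
  assumes "atomic P"
  shows "deriv Ax em (All (comp P) # \<Gamma>) (Neg (Ex P))"
  unfolding Neg_def
proof (rule deriv.ImpI, rule deriv.ExE[where A = P])
  show "deriv Ax em (Ex P # All (comp P) # \<Gamma>) (Ex P)"
    by (simp add: deriv.Assm)
  let ?\<Delta> = "P # map lift (Ex P # All (comp P) # \<Gamma>)"
  have "deriv Ax em ?\<Delta> (All (substf (up (\<lambda>n. Var (Suc n))) (comp P)))"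
    by (rule deriv.Assm) (simp add: lift_def)
  then have "deriv Ax em ?\<Delta> (comp P)"
    by (metis deriv.AllE inst_up_lift)
  moreover have "deriv Ax em ?\<Delta> P"
    by (simp add: deriv.Assm)
  ultimately show "deriv Ax em ?\<Delta> (lift Bot)"
    using assms by (blast intro: deriv_atomic_comp_contr)
qed

lemma HA_MRK_EMminus:
  assumes "atomic P" and pos: "HA_MRK (A # \<Gamma>) (Ex P)" and neg: "HA_MRK (Neg A # \<Gamma>) (Ex P)"
  shows "HA_MRK \<Gamma> (Ex P)"
proof -
  let ?\<Delta> = "All (comp P) # \<Gamma>"
  have not_Ex: "HA_MRK ?\<Delta> (Neg (Ex P))"
    using assms(1) by (rule deriv_All_comp_Neg_Ex)
  have "HA_MRK (A # ?\<Delta>) (Ex P)"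
    using pos by (rule deriv_weaken) auto
  moreover have "HA_MRK (A # ?\<Delta>) (Neg (Ex P))"
    using not_Ex by (rule deriv_weaken) auto
  ultimately have "HA_MRK (A # ?\<Delta>) Bot"
    by (rule deriv_NegE[rotated])
  then have "HA_MRK ?\<Delta> (Neg A)"
    unfolding Neg_def by (rule deriv.ImpI)
  moreover have "HA_MRK (Neg A # ?\<Delta>) (Ex P)"
    using neg by (rule deriv_weaken) auto
  ultimately have "HA_MRK ?\<Delta> (Ex P)"
    by (rule deriv_cut[rotated])
  then have "HA_MRK ?\<Delta> Bot"
    by (rule deriv_NegE[OF not_Ex])
  then have "HA_MRK \<Gamma> (Neg (All (comp P)))"
    unfolding Neg_def by (rule deriv.ImpI)
  moreover have "HA_MRK \<Gamma> (MRK_inst (comp P))"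
    using assms(1) by (intro deriv.ExtraAx) (auto simp: MRK_def intro: comp_atomic)
  ultimately have "HA_MRK \<Gamma> (Ex (comp (comp P)))"
    unfolding MRK_inst_def by (rule deriv.ImpE[rotated])
  then show ?thesis
    using assms(1) by (simp add: comp_comp)
qed

theorem mainTheorem7:
  shows "(\<forall>P. atomic P \<longrightarrow> HA_EM [] (MRK_inst P))
       \<and> (\<forall>\<Gamma> A P. atomic P \<longrightarrow> HA_MRK (A # \<Gamma>) (Ex P) \<longrightarrow> HA_MRK (Neg A # \<Gamma>) (Ex P)
             \<longrightarrow> HA_MRK \<Gamma> (Ex P))"
  using HA_EM_MRK_inst HA_MRK_EMminus by blast

end
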